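(* Let $n\geq 1$ and let $\Gamma'$ be a connected 3-regular graph with $n-1$ legs. Let $\Gamma_1,\Gamma_2$ be two graphs each obtained from $\Gamma'$ by adding a new vertex in the interior of some edge or leg of $\Gamma'$ and attaching a new leg to that vertex. Then $\Gamma_1$ and $\Gamma_2$ (which are 3-regular graphs with $n$ legs and the same first Betti number as $\Gamma'$) are linked.
   Context: A graph with $n$ legs consists of a finite nonempty vertex set, a finite set of half-edges, an involution on half-edges with exactly $n$ fixed points (legs), and an endpoint map from half-edges to vertices; edges are the 2-element orbits. Graphs are connected. Valency of $v$ = number of half-edges (including legs) at $v$; 3-regular means all valencies are 3. $b_1=|E|-|V|+1$. $\Gamma/e$ denotes contraction of an edge $e$. Strongly linked: non-loop edges $e_i\in E(\Gamma_i)$ and an isomorphism $\Gamma_1/e_1\cong\Gamma_2/e_2$ carrying the image vertex of $e_1$ to that of $e_2$; linked: joined by a finite chain of consecutively strongly linked graphs. *)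

theory Defs
  imports Main
begin

text \<open>A graph with legs: vertex set, half-edge set, an involution on half-edges
  (fixed points = legs, 2-element orbits = edges) and an endpoint map.\<close>

record ('v, 'h) lgraph =
  verts  :: "'v set"
  hedges :: "'h set"
  hinv   :: "'h \<Rightarrow> 'h"
  hend   :: "'h \<Rightarrow> 'v"

definition legs :: "('v, 'h) lgraph \<Rightarrow> 'h set" where
  "legs G = {h \<in> hedges G. hinv G h = h}"

definition edges :: "('v, 'h) lgraph \<Rightarrow> 'h set set" where
  "edges G = {{h, hinv G h} | h. h \<in> hedges G \<and> hinv G h \<noteq> h}"

definition adj :: "('v, 'h) lgraph \<Rightarrow> 'v \<Rightarrow> 'v \<Rightarrow> bool" where
  "adj G v w \<longleftrightarrow> (\<exists>h \<in> hedges G. hinv G h \<noteq> h \<and> hend G h = v \<and> hend G (hinv G h) = w)"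

definition connected_graph :: "('v, 'h) lgraph \<Rightarrow> bool" where
  "connected_graph G \<longleftrightarrow> (\<forall>v \<in> verts G. \<forall>w \<in> verts G. (adj G)\<^sup>*\<^sup>* v w)"

definition is_graph :: "('v, 'h) lgraph \<Rightarrow> bool" where
  "is_graph G \<longleftrightarrow> finite (verts G) \<and> verts G \<noteq> {} \<and> finite (hedges G)
     \<and> (\<forall>h \<in> hedges G. hinv G h \<in> hedges G \<and> hinv G (hinv G h) = h \<and> hend G h \<in> verts G)
     \<and> connected_graph G"

definition valency :: "('v, 'h) lgraph \<Rightarrow> 'v \<Rightarrow> nat" where
  "valency G v = card {h \<in> hedges G. hend G h = v}"

definition three_regular :: "('v, 'h) lgraph \<Rightarrow> bool" where
  "three_regular G \<longleftrightarrow> (\<forall>v \<in> verts G. valency G v = 3)"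

definition betti1 :: "('v, 'h) lgraph \<Rightarrow> int" where
  "betti1 G = int (card (edges G)) - int (card (verts G)) + 1"

definition nonloop_he :: "('v, 'h) lgraph \<Rightarrow> 'h \<Rightarrow> bool" where
  "nonloop_he G h \<longleftrightarrow> h \<in> hedges G \<and> hinv G h \<noteq> h \<and> hend G h \<noteq> hend G (hinv G h)"

definition contract :: "('v, 'h) lgraph \<Rightarrow> 'h \<Rightarrow> ('v, 'h) lgraph" where
  "contract G h = \<lparr> verts = verts G - {hend G (hinv G h)},
      hedges = hedges G - {h, hinv G h},
      hinv = hinv G,
      hend = (\<lambda>x. if hend G x = hend G (hinv G h) then hend G h else hend G x) \<rparr>"

definition contract_vertex :: "('v, 'h) lgraph \<Rightarrow> 'h \<Rightarrow> 'v" where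
  "contract_vertex G h = hend G h"

definition iso_at :: "('v, 'h) lgraph \<Rightarrow> ('w, 'k) lgraph \<Rightarrow> 'v \<Rightarrow> 'w \<Rightarrow> bool" where
  "iso_at G1 G2 a b \<longleftrightarrow> (\<exists>fV fH. bij_betw fV (verts G1) (verts G2)
      \<and> bij_betw fH (hedges G1) (hedges G2)
      \<and> (\<forall>h \<in> hedges G1. fH (hinv G1 h) = hinv G2 (fH h) \<and> fV (hend G1 h) = hend G2 (fH h))
      \<and> fV a = b)"

definition strongly_linked :: "('v, 'h) lgraph \<Rightarrow> ('w, 'k) lgraph \<Rightarrow> bool" where
  "strongly_linked G1 G2 \<longleftrightarrow> (\<exists>h1 h2. nonloop_he G1 h1 \<and> nonloop_he G2 h2
      \<and> iso_at (contract G1 h1) (contract G2 h2) (contract_vertex G1 h1) (contract_vertex G2 h2))"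

definition linked :: "('v, 'h) lgraph \<Rightarrow> ('v, 'h) lgraph \<Rightarrow> bool" where
  "linked G1 G2 \<longleftrightarrow>
     (\<lambda>A B. is_graph A \<and> is_graph B \<and> strongly_linked A B)\<^sup>*\<^sup>* G1 G2"

text \<open>Insert a new vertex w in the interior of the edge (or leg) containing h0,
  with new half-edges a (paired with h0), b (paired with the old partner of h0,
  or a leg if h0 was a leg) and the new leg c, all attached at w.\<close>
definition insert_leg :: "('v, 'h) lgraph \<Rightarrow> 'h \<Rightarrow> 'v \<Rightarrow> 'h \<Rightarrow> 'h \<Rightarrow> 'h \<Rightarrow> ('v, 'h) lgraph" where
  "insert_leg G h0 w a b c = \<lparr> verts = insert w (verts G),
      hedges = hedges G \<union> {a, b, c},
      hinv = (\<lambda>x. if x = h0 then a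
                  else if x = a then h0
                  else if x = b then (if hinv G h0 = h0 then b else hinv G h0)
                  else if x = hinv G h0 \<and> hinv G h0 \<noteq> h0 then b
                  else if x = c then c
                  else hinv G x),
      hend = (\<lambda>x. if x \<in> {a, b, c} then w else hend G x) \<rparr>"

definition obtained_by_leg_insertion :: "('v, 'h) lgraph \<Rightarrow> ('v, 'h) lgraph \<Rightarrow> bool" where
  "obtained_by_leg_insertion G' G \<longleftrightarrow> (\<exists>h0 \<in> hedges G'. \<exists>w a b c.
      w \<notin> verts G' \<and> a \<notin> hedges G' \<and> b \<notin> hedges G' \<and> c \<notin> hedges G'
      \<and> distinct [a, b, c] \<and> G = insert_leg G' h0 w a b c)"

end

theory Submission
  imports Defs
begin

text \<open>Subdividing the edge (or leg) of h0 by a new vertex w and contracting the new edge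
  between w and the old endpoint of h0 undoes the subdivision; what remains is G' with the
  new leg attached at that endpoint. Hence two leg insertions at half-edges with a common
  endpoint are strongly linked, as both contract to G' with one extra leg there. Inserting at
  h0 or at its partner half-edge produces the same graph, so by connectivity of G' the
  insertion point can be moved along paths from any half-edge to any other.\<close>

definition wf_lgraph :: "('v, 'h) lgraph \<Rightarrow> bool" where
  "wf_lgraph G \<longleftrightarrow>
     (\<forall>h \<in> hedges G. hinv G h \<in> hedges G \<and> hinv G (hinv G h) = h \<and> hend G h \<in> verts G)"

lemma is_graph_iff_wf_lgraph:
  "is_graph G \<longleftrightarrow> finite (verts G) \<and> verts G \<noteq> {} \<and> finite (hedges G)
     \<and> wf_lgraph G \<and> connected_graph G"
  unfolding is_graph_def wf_lgraph_def by blast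

lemma wf_lgraphD:
  assumes "wf_lgraph G" "h \<in> hedges G"
  shows "hinv G h \<in> hedges G" "hinv G (hinv G h) = h" "hend G h \<in> verts G"
  using assms unfolding wf_lgraph_def by auto

definition add_leg :: "('v, 'h) lgraph \<Rightarrow> 'v \<Rightarrow> 'h \<Rightarrow> ('v, 'h) lgraph" where
  "add_leg G v d = G\<lparr>hedges := insert d (hedges G), hinv := (hinv G)(d := d),
     hend := (hend G)(d := v)\<rparr>"

lemma iso_at_trans:
  assumes "iso_at G1 G2 x y" "iso_at G2 G3 y z"
  shows "iso_at G1 G3 x z"
proof -
  obtain fV fH where f: "bij_betw fV (verts G1) (verts G2)" "bij_betw fH (hedges G1) (hedges G2)"
    "\<forall>h \<in> hedges G1. fH (hinv G1 h) = hinv G2 (fH h) \<and> fV (hend G1 h) = hend G2 (fH h)"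
    "fV x = y"
    using assms(1) unfolding iso_at_def by blast
  obtain gV gH where g: "bij_betw gV (verts G2) (verts G3)" "bij_betw gH (hedges G2) (hedges G3)"
    "\<forall>h \<in> hedges G2. gH (hinv G2 h) = hinv G3 (gH h) \<and> gV (hend G2 h) = hend G3 (gH h)"
    "gV y = z"
    using assms(2) unfolding iso_at_def by blast
  have "fH h \<in> hedges G2" if "h \<in> hedges G1" for h
    using f(2) that by (auto simp: bij_betw_def)
  then show ?thesis
    unfolding iso_at_def using f g
    by (intro exI[of _ "gV \<circ> fV"] exI[of _ "gH \<circ> fH"]) (auto intro: bij_betw_trans)
qed

lemma iso_at_sym:
  assumes "iso_at G1 G2 x y" "wf_lgraph G1" "x \<in> verts G1"
  shows "iso_at G2 G1 y x"
proof -
  obtain fV fH where f: "bij_betw fV (verts G1) (verts G2)" "bij_betw fH (hedges G1) (hedges G2)"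
    "\<forall>h \<in> hedges G1. fH (hinv G1 h) = hinv G2 (fH h) \<and> fV (hend G1 h) = hend G2 (fH h)"
    "fV x = y"
    using assms(1) unfolding iso_at_def by blast
  define gV where "gV = inv_into (verts G1) fV"
  define gH where "gH = inv_into (hedges G1) fH"
  have "gH (hinv G2 k) = hinv G1 (gH k) \<and> gV (hend G2 k) = hend G1 (gH k)"
    if "k \<in> hedges G2" for k
  proof -
    obtain h where h: "h \<in> hedges G1" "k = fH h"
      using f(2) \<open>k \<in> hedges G2\<close> by (auto simp: bij_betw_def)
    have "gH k = h" "gH (fH (hinv G1 h)) = hinv G1 h" "gV (fV (hend G1 h)) = hend G1 h"
      using h f(1,2) wf_lgraphD[OF assms(2) h(1)] unfolding gH_def gV_def
      by (auto simp: bij_betw_def)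
    then show ?thesis
      using f(3) h by auto
  qed
  moreover have "gV y = x"
    using f(1,4) assms(3) unfolding gV_def by (auto simp: bij_betw_def)
  ultimately show ?thesis
    unfolding iso_at_def gV_def gH_def using f(1,2)
    by (intro exI[of _ gV] exI[of _ gH]) (auto simp: gV_def gH_def intro: bij_betw_inv_into)
qed

lemma iso_at_same_verts:
  assumes "verts G1 = verts G2" "v \<in> verts G1" "bij_betw fH (hedges G1) (hedges G2)"
    and "\<And>h. h \<in> hedges G1 \<Longrightarrow> fH (hinv G1 h) = hinv G2 (fH h) \<and> hend G1 h = hend G2 (fH h)"
  shows "iso_at G1 G2 v v"
  unfolding iso_at_def using assms by (intro exI[of _ id] exI[of _ fH]) auto

lemma wf_lgraph_contract:
  assumes "wf_lgraph G" "nonloop_he G h"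
  shows "wf_lgraph (contract G h)" "contract_vertex G h \<in> verts (contract G h)"
proof -
  have "hinv G x \<noteq> h" "hinv G x \<noteq> hinv G h"
    if "x \<in> hedges G" "x \<noteq> h" "x \<noteq> hinv G h" for x
    using that assms wf_lgraphD(2) unfolding nonloop_he_def by metis+
  then show "wf_lgraph (contract G h)" "contract_vertex G h \<in> verts (contract G h)"
    using assms wf_lgraphD[OF assms(1)]
    unfolding wf_lgraph_def contract_def contract_vertex_def nonloop_he_def by auto
qed

lemma strongly_linked_via_common_contraction:
  assumes "nonloop_he G1 h1" "nonloop_he G2 h2" "wf_lgraph G2"
    and "iso_at (contract G1 h1) H (contract_vertex G1 h1) v"
    and "iso_at (contract G2 h2) H (contract_vertex G2 h2) v"
  shows "strongly_linked G1 G2"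
proof -
  have "iso_at H (contract G2 h2) v (contract_vertex G2 h2)"
    using assms(5) wf_lgraph_contract[OF assms(3,2)] by (rule iso_at_sym)
  with assms(4) have "iso_at (contract G1 h1) (contract G2 h2) (contract_vertex G1 h1)
      (contract_vertex G2 h2)"
    by (rule iso_at_trans)
  then show ?thesis
    using assms(1,2) unfolding strongly_linked_def by blast
qed

lemma linked_refl: "linked G G"
  unfolding linked_def by simp

lemma linked_snoc:
  assumes "linked A B" "strongly_linked B C" "is_graph B" "is_graph C"
  shows "linked A C"
  using assms unfolding linked_def by (simp add: rtranclp.rtrancl_into_rtrancl)

locale leg_insertion =
  fixes G :: "('v, 'h) lgraph" and h0 :: 'h and w :: 'v and a b c :: 'h
  assumes wf: "wf_lgraph G" and h0_in: "h0 \<in> hedges G"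
    and fresh: "w \<notin> verts G" "a \<notin> hedges G" "b \<notin> hedges G" "c \<notin> hedges G"
      "distinct [a, b, c]"
begin

abbreviation G_ins :: "('v, 'h) lgraph" where
  "G_ins \<equiv> insert_leg G h0 w a b c"

lemma fresh_names [simp]:
  "w \<notin> verts G" "a \<notin> hedges G" "b \<notin> hedges G" "c \<notin> hedges G"
  "x \<in> hedges G \<Longrightarrow> x \<noteq> a" "x \<in> hedges G \<Longrightarrow> x \<noteq> b" "x \<in> hedges G \<Longrightarrow> x \<noteq> c"
  "x \<in> hedges G \<Longrightarrow> a \<noteq> x" "x \<in> hedges G \<Longrightarrow> b \<noteq> x" "x \<in> hedges G \<Longrightarrow> c \<noteq> x"
  "v \<in> verts G \<Longrightarrow> v \<noteq> w" "v \<in> verts G \<Longrightarrow> w \<noteq> v"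
  "a \<noteq> b" "a \<noteq> c" "b \<noteq> c" "b \<noteq> a" "c \<noteq> a" "c \<noteq> b"
  using fresh by auto

lemma h0_facts [simp]:
  "h0 \<in> hedges G" "hinv G h0 \<in> hedges G" "hinv G (hinv G h0) = h0" "hend G h0 \<in> verts G"
  "hend G (hinv G h0) \<in> verts G"
  using h0_in wf_lgraphD[OF wf h0_in] wf_lgraphD[OF wf wf_lgraphD(1)[OF wf h0_in]] by auto

lemma insert_leg_simps [simp]:
  "verts G_ins = insert w (verts G)"
  "hedges G_ins = hedges G \<union> {a, b, c}"
  "hinv G_ins h0 = a" "hinv G_ins a = h0" "hinv G_ins c = c"
  "hinv G_ins b = (if hinv G h0 = h0 then b else hinv G h0)"
  "hinv G h0 \<noteq> h0 \<Longrightarrow> hinv G_ins (hinv G h0) = b"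
  "x \<in> hedges G \<Longrightarrow> x \<noteq> h0 \<Longrightarrow> x \<noteq> hinv G h0 \<Longrightarrow> hinv G_ins x = hinv G x"
  "hend G_ins a = w" "hend G_ins b = w" "hend G_ins c = w"
  "x \<in> hedges G \<Longrightarrow> hend G_ins x = hend G x"
  using h0_in unfolding insert_leg_def by auto

lemma hinv_eq_h0_iff [simp]:
  "x \<in> hedges G \<Longrightarrow> hinv G x = h0 \<longleftrightarrow> x = hinv G h0"
  "x \<in> hedges G \<Longrightarrow> hinv G x = hinv G h0 \<longleftrightarrow> x = h0"
  using wf_lgraphD[OF wf] h0_in by metis+

lemma wf_lgraph_insert_leg: "wf_lgraph G_ins"
  unfolding wf_lgraph_def
proof
  fix x assume "x \<in> hedges G_ins"
  then consider "x \<in> {a, b, c}" | "x = h0" | "x = hinv G h0" "x \<noteq> h0"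
    | "x \<in> hedges G" "x \<noteq> h0" "x \<noteq> hinv G h0"
    by (cases "x = h0"; cases "x = hinv G h0") auto
  then show "hinv G_ins x \<in> hedges G_ins \<and> hinv G_ins (hinv G_ins x) = x \<and> hend G_ins x \<in> verts G_ins"
    by cases (use wf_lgraphD[OF wf] in \<open>auto split: if_splits\<close>)
qed

lemma adj_insert_leg:
  assumes "adj G p q"
  shows "(adj G_ins)\<^sup>*\<^sup>* p q"
proof -
  obtain e where e: "e \<in> hedges G" "hinv G e \<noteq> e" "hend G e = p" "hend G (hinv G e) = q"
    using assms unfolding adj_def by blast
  consider "e = h0" | "e = hinv G h0" | "e \<noteq> h0" "e \<noteq> hinv G h0"
    by blast
  then show ?thesis
  proof cases
    case 1
    have "adj G_ins p w"
      unfolding adj_def using 1 e by (auto intro!: bexI[of _ h0])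
    moreover have "adj G_ins w q"
      unfolding adj_def using 1 e by (auto intro!: bexI[of _ b])
    ultimately show ?thesis by auto
  next
    case 2
    have "adj G_ins p w"
      unfolding adj_def using 2 e by (auto intro!: bexI[of _ e])
    moreover have "adj G_ins w q"
      unfolding adj_def using 2 e by (auto intro!: bexI[of _ a])
    ultimately show ?thesis by auto
  next
    case 3
    then have "adj G_ins p q"
      unfolding adj_def using e wf_lgraphD[OF wf e(1)] by (auto intro!: bexI[of _ e])
    then show ?thesis by auto
  qed
qed

lemma connected_insert_leg:
  assumes "connected_graph G"
  shows "connected_graph G_ins"
proof -
  let ?v = "hend G h0"
  have "(adj G_ins)\<^sup>*\<^sup>* p q" if "(adj G)\<^sup>*\<^sup>* p q" for p q
    using that by induction (auto intro: rtranclp_trans adj_insert_leg)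
  then have old: "(adj G_ins)\<^sup>*\<^sup>* p q" if "p \<in> verts G" "q \<in> verts G" for p q
    using assms that unfolding connected_graph_def by blast
  have "adj G_ins w ?v"
    unfolding adj_def by (auto intro!: bexI[of _ a])
  moreover have "adj G_ins ?v w"
    unfolding adj_def by (auto intro!: bexI[of _ h0])
  ultimately
  have "(adj G_ins)\<^sup>*\<^sup>* p ?v" "(adj G_ins)\<^sup>*\<^sup>* ?v p" if "p \<in> verts G_ins" for p
    using that old[of p ?v] old[of ?v p] by auto
  then show ?thesis
    unfolding connected_graph_def by (meson rtranclp_trans)
qed

lemma is_graph_insert_leg:
  assumes "is_graph G"
  shows "is_graph G_ins"
  using assms wf_lgraph_insert_leg connected_insert_leg by (simp add: is_graph_iff_wf_lgraph)

lemma nonloop_insert_leg: "nonloop_he G_ins h0"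
  unfolding nonloop_he_def by auto

lemma contract_vertex_insert_leg: "contract_vertex G_ins h0 = hend G h0"
  unfolding contract_vertex_def by simp

lemma iso_contract_insert_leg:
  assumes "d \<notin> hedges G"
  shows "iso_at (contract G_ins h0) (add_leg G (hend G h0) d) (hend G h0) (hend G h0)"
proof (rule iso_at_same_verts)
  let ?C = "contract G_ins h0" and ?H = "add_leg G (hend G h0) d"
  define fH where "fH x = (if x = b then h0 else if x = c then d else x)" for x
  have d_new: "x \<in> hedges G \<Longrightarrow> x \<noteq> d" for x
    using assms by auto
  have hedges_C: "hedges ?C = (hedges G - {h0}) \<union> {b, c}"
    unfolding contract_def by auto
  show "verts ?C = verts ?H"
    unfolding contract_def add_leg_def by auto
  show "hend G h0 \<in> verts ?C"
    unfolding contract_def by auto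
  show "bij_betw fH (hedges ?C) (hedges ?H)"
    unfolding hedges_C
    by (rule bij_betw_byWitness[where f' = "\<lambda>y. if y = h0 then b else if y = d then c else y"])
      (use assms in \<open>auto simp: fH_def add_leg_def\<close>)
  fix x assume "x \<in> hedges ?C"
  then consider "x = b" | "x = c" | "x = hinv G h0" "x \<noteq> h0"
    | "x \<in> hedges G" "x \<noteq> h0" "x \<noteq> hinv G h0"
    unfolding hedges_C by blast
  then show "fH (hinv ?C x) = hinv ?H (fH x) \<and> hend ?C x = hend ?H (fH x)"
    by cases (use d_new wf_lgraphD[OF wf] in \<open>auto simp: fH_def add_leg_def contract_def\<close>)
qed

lemma insert_leg_opposite:
  assumes "hinv G h0 \<noteq> h0"
  shows "G_ins = insert_leg G (hinv G h0) w b a c"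
  using assms unfolding insert_leg_def by (auto simp: fun_eq_iff)

lemma leg_insertion_opposite: "leg_insertion G (hinv G h0) w b a c"
  using wf fresh by unfold_locales auto

lemma leg_insertion_at: "e \<in> hedges G \<Longrightarrow> leg_insertion G e w a b c"
  using wf fresh by unfold_locales

end

lemma strongly_linked_insert_leg_same_vertex:
  assumes "leg_insertion G h w a b c" "leg_insertion G h' w' a' b' c'" "hend G h = hend G h'"
  shows "strongly_linked (insert_leg G h w a b c) (insert_leg G h' w' a' b' c')"
proof (rule strongly_linked_via_common_contraction)
  interpret I: leg_insertion G h w a b c by fact
  interpret I': leg_insertion G h' w' a' b' c' by fact
  show "nonloop_he (insert_leg G h w a b c) h" "nonloop_he (insert_leg G h' w' a' b' c') h'"
    by (fact I.nonloop_insert_leg I'.nonloop_insert_leg)+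
  show "wf_lgraph (insert_leg G h' w' a' b' c')"
    by (fact I'.wf_lgraph_insert_leg)
  show "iso_at (contract (insert_leg G h w a b c) h) (add_leg G (hend G h) c)
      (contract_vertex (insert_leg G h w a b c) h) (hend G h)"
    using I.iso_contract_insert_leg I.contract_vertex_insert_leg by simp
  show "iso_at (contract (insert_leg G h' w' a' b' c') h') (add_leg G (hend G h) c)
      (contract_vertex (insert_leg G h' w' a' b' c') h') (hend G h)"
    using I'.iso_contract_insert_leg I'.contract_vertex_insert_leg assms(3) by simp
qed

lemma linked_insert_leg_along_path:
  assumes "is_graph G" "leg_insertion G h w a b c"
    and "(adj G)\<^sup>*\<^sup>* (hend G h) v" "e \<in> hedges G" "hend G e = v"
  shows "linked (insert_leg G h w a b c) (insert_leg G e w a b c)"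
proof -
  let ?I = "\<lambda>e. insert_leg G e w a b c"
  have ins: "leg_insertion G e w a b c" if "e \<in> hedges G" for e
    using assms(2) that by (rule leg_insertion.leg_insertion_at)
  have graph: "is_graph (?I e)" if "e \<in> hedges G" for e
    using ins[OF that] assms(1) by (rule leg_insertion.is_graph_insert_leg)
  show ?thesis
    using assms(3-5)
  proof (induction arbitrary: e)
    case base
    have "strongly_linked (?I h) (?I e)"
      using assms(2) ins[OF base(1)] base(2)[symmetric]
      by (rule strongly_linked_insert_leg_same_vertex)
    with linked_refl show ?case
      using graph[OF leg_insertion.h0_in[OF assms(2)]] graph[OF base(1)] by (rule linked_snoc)
  next
    case (step x y)
    then obtain f where f: "f \<in> hedges G" "hinv G f \<noteq> f" "hend G f = x" "hend G (hinv G f) = y"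
      unfolding adj_def by blast
    have "linked (?I h) (?I f)"
      using f(1,3) by (rule step.IH)
    moreover have "strongly_linked (?I f) (?I e)"
      unfolding leg_insertion.insert_leg_opposite[OF ins[OF f(1)] f(2)]
      using leg_insertion.leg_insertion_opposite[OF ins[OF f(1)]] ins[OF step.prems(1)]
      by (rule strongly_linked_insert_leg_same_vertex) (use f(4) step.prems(2) in simp)
    ultimately show ?case
      using graph[OF f(1)] graph[OF step.prems(1)] by (rule linked_snoc)
  qed
qed

lemma linked_insert_leg:
  assumes "is_graph G" "leg_insertion G h w a b c" "leg_insertion G h' w' a' b' c'"
  shows "linked (insert_leg G h w a b c) (insert_leg G h' w' a' b' c')"
proof -
  interpret I: leg_insertion G h w a b c by fact
  interpret I': leg_insertion G h' w' a' b' c' by fact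
  have at_h': "leg_insertion G h' w a b c"
    using I'.h0_in by (rule I.leg_insertion_at)
  have path: "(adj G)\<^sup>*\<^sup>* (hend G h) (hend G h')"
    using assms(1) I.h0_facts(4) I'.h0_facts(4) unfolding is_graph_def connected_graph_def by blast
  have "linked (insert_leg G h w a b c) (insert_leg G h' w a b c)"
    using assms(1,2) path I'.h0_in refl by (rule linked_insert_leg_along_path)
  moreover have "strongly_linked (insert_leg G h' w a b c) (insert_leg G h' w' a' b' c')"
    using at_h' assms(3) refl by (rule strongly_linked_insert_leg_same_vertex)
  ultimately show ?thesis
    using leg_insertion.is_graph_insert_leg[OF at_h' assms(1)] I'.is_graph_insert_leg[OF assms(1)]
    by (rule linked_snoc)
qed

lemma obtained_by_leg_insertionE:
  assumes "is_graph G" "obtained_by_leg_insertion G G1"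
  obtains h w a b c where "leg_insertion G h w a b c" "G1 = insert_leg G h w a b c"
proof -
  have "wf_lgraph G"
    using assms(1) by (simp add: is_graph_iff_wf_lgraph)
  with assms(2) show thesis
    unfolding obtained_by_leg_insertion_def using that leg_insertion.intro by metis
qed

theorem mainTheorem11:
  fixes G' G1 G2 :: "('v, 'h) lgraph" and n :: nat
  assumes "n \<ge> 1"
    and "is_graph G'" and "three_regular G'" and "card (legs G') = n - 1"
    and "obtained_by_leg_insertion G' G1"
    and "obtained_by_leg_insertion G' G2"
  shows "linked G1 G2"
proof -
  obtain h1 w1 a1 b1 c1
    where ins1: "leg_insertion G' h1 w1 a1 b1 c1" and G1: "G1 = insert_leg G' h1 w1 a1 b1 c1"
    using assms(2,5) by (rule obtained_by_leg_insertionE)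
  obtain h2 w2 a2 b2 c2
    where ins2: "leg_insertion G' h2 w2 a2 b2 c2" and G2: "G2 = insert_leg G' h2 w2 a2 b2 c2"
    using assms(2,6) by (rule obtained_by_leg_insertionE)
  show ?thesis
    unfolding G1 G2 using assms(2) ins1 ins2 by (rule linked_insert_leg)
qed

end
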